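(* Let $n$ be a positive integer and $g=3n+1$. Then the image under $\sigma$ of $\mathcal{G}_{2n}(g,q\le 3)$ contains no pseudo-symmetric gapset, and in fact $$\sigma\big(\mathcal{G}_{2n}(g,q\le 3)\big)=\mathcal{G}_{2n+1}(g+1)\setminus\mathcal{P},$$ where $\mathcal{P}=\{G\in\mathcal{G}_{2n+1}(g+1): G \text{ is pseudo-symmetric}\}$.
   Context: A gapset is a finite set $G\subset\mathbb{N}=\{1,2,\dots\}$ such that whenever $z\in G$ and $z=x+y$ with $x,y\in\mathbb{N}$, then $x\in G$ or $y\in G$; its genus is $g=\#G$. Write $G=\{\ell_1<\dots<\ell_g\}$. The multiplicity is $m(G)=\min\{s\in\mathbb{N}:s\notin G\}$, the conductor $c(G)=\min\{s\in\mathbb{N}: s+t\notin G\ \forall t\in\mathbb{N}_0\}$, the Frobenius number $F(G)=c(G)-1$ (equal to $\ell_g$ for nonempty $G$), and the depth $q(G)=\lceil c(G)/m(G)\rceil$. $G$ is pseudo-symmetric if $F(G)=2g-2$. $G$ is pure $\kappa$-sparse if $\ell_{i+1}-\ell_i\le\kappa$ for all $i$ with equality for at least one $i$. $\mathcal{G}_\kappa(g)$ is the set of pure $\kappa$-sparse gapsets of genus $g$, and $\mathcal{G}_\kappa(g,q\le 3)$ the subset of those with depth at most $3$. For $G=\{\ell_1<\dots<\ell_g\}\in\mathcal{G}_{2n}(g)$ let $\alpha=\max\{i:\ell_{i+1}-\ell_i=2n\}$ and define $$\sigma(G)=\{1\}\cup\{\ell_i+1: 1\le i\le\alpha\}\cup\{\ell_i+2:\alpha+1\le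 i\le g\}$$ (note $\ell_1=1$, so $\sigma(G)=\{1<2<\ell_2+1<\dots<\ell_\alpha+1<\ell_{\alpha+1}+2<\dots<\ell_g+2\}$). *)

theory Defs
  imports Main
begin

definition gapset :: "nat set \<Rightarrow> bool" where
  "gapset G \<longleftrightarrow> finite G \<and> 0 \<notin> G \<and>
     (\<forall>z\<in>G. \<forall>x y. 0 < x \<longrightarrow> 0 < y \<longrightarrow> z = x + y \<longrightarrow> x \<in> G \<or> y \<in> G)"

definition genus :: "nat set \<Rightarrow> nat" where
  "genus G = card G"

definition multiplicity :: "nat set \<Rightarrow> nat" where
  "multiplicity G = (LEAST s. 0 < s \<and> s \<notin> G)"

definition conductor :: "nat set \<Rightarrow> nat" where
  "conductor G = (LEAST s. 0 < s \<and> (\<forall>t. s + t \<notin> G))"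

definition frobenius :: "nat set \<Rightarrow> nat" where
  "frobenius G = conductor G - 1"

text \<open>depth q(G) = ceiling (c(G) / m(G)), written as nat ceiling division (m(G) \<ge> 1 always)\<close>
definition depth :: "nat set \<Rightarrow> nat" where
  "depth G = (conductor G + multiplicity G - 1) div multiplicity G"

definition pseudo_symmetric :: "nat set \<Rightarrow> bool" where
  "pseudo_symmetric G \<longleftrightarrow> int (frobenius G) = 2 * int (genus G) - 2"

definition pure_sparse :: "nat \<Rightarrow> nat set \<Rightarrow> bool" where
  "pure_sparse \<kappa> G \<longleftrightarrow>
     (let l = sorted_list_of_set G in
        (\<forall>i. i + 1 < length l \<longrightarrow> l ! (i + 1) - l ! i \<le> \<kappa>) \<and>
        (\<exists>i. i + 1 < length l \<and> l ! (i + 1) - l ! i = \<kappa>))"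

definition pure_sparse_gapsets :: "nat \<Rightarrow> nat \<Rightarrow> nat set set" where
  "pure_sparse_gapsets \<kappa> g = {G. gapset G \<and> genus G = g \<and> pure_sparse \<kappa> G}"

definition pure_sparse_gapsets_depth3 :: "nat \<Rightarrow> nat \<Rightarrow> nat set set" where
  "pure_sparse_gapsets_depth3 \<kappa> g = {G \<in> pure_sparse_gapsets \<kappa> g. depth G \<le> 3}"

text \<open>With 0-based indices j (j = i - 1), the paper's
  alpha = a + 1 where a is the largest j with l!(j+1) - l!j = 2n; then
  sigma(G) = {1} \<union> {l!j + 1 | j \<le> a} \<union> {l!j + 2 | a < j < g}.\<close>
definition sigma :: "nat \<Rightarrow> nat set \<Rightarrow> nat set" where
  "sigma n G =
     (let l = sorted_list_of_set G;
          a = (GREATEST j. j + 1 < length l \<and> l ! (j + 1) - l ! j = 2 * n)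
      in {1} \<union> {l ! j + 1 | j. j \<le> a} \<union> {l ! j + 2 | j. a < j \<and> j < length l})"

end

theory Submission
  imports Defs
begin

text \<open>
  \<sigma> inserts the gap 1, shifts the gaps up to the last 2n-jump \<open>l\<^sub>\<alpha> < l\<^sub>\<alpha>\<^sub>+\<^sub>1\<close> by one and the
  remaining gaps by two. So it raises the genus by one and the Frobenius number by two, keeps all
  other jumps, and turns that jump into a (2n+1)-jump. The pairing bound
  \<open>F + 1 + #(G \<inter> (F - G)) \<le> 2g\<close> together with depth \<le> 3 and sparseness forces
  \<open>F(G) \<le> 6n - 1\<close> for genus 3n + 1, hence \<open>F(\<sigma> G) \<le> 6n + 1 < 2(g + 1) - 2\<close>; the bound
  \<open>m(G) \<ge> 2n\<close> coming from the 2n-jump then makes \<open>\<sigma> G\<close> a gapset.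
  Conversely, let H be pure (2n+1)-sparse of genus 3n + 2 and not pseudo-symmetric, so
  \<open>F(H) \<le> 2(3n + 2) - 1\<close> and \<open>F(H) \<noteq> 6n + 2\<close>. H cannot be symmetric either: its jump ending at
  \<open>F = 6n + 3\<close> would start at \<open>F - m = 2m\<close> with \<open>m = 2n + 1\<close>, but 2m is not a gap. Hence
  \<open>F(H) \<le> 6n + 1\<close>, which makes the (2n+1)-jump of H unique and rules out a later 2n-jump, so
  undoing the shift around it gives the preimage.
\<close>

section \<open>Consecutive gaps\<close>

definition consecutive :: "nat set \<Rightarrow> nat \<Rightarrow> nat \<Rightarrow> bool" where
  "consecutive G p q \<longleftrightarrow> p \<in> G \<and> q \<in> G \<and> p < q \<and> (\<forall>x. p < x \<and> x < q \<longrightarrow> x \<notin> G)"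

lemma consecutive_le: "consecutive G p q \<Longrightarrow> r \<in> G \<Longrightarrow> p < r \<Longrightarrow> q \<le> r"
  unfolding consecutive_def by (meson not_le)

lemma consecutive_unique: "consecutive G p q \<Longrightarrow> consecutive G p q' \<Longrightarrow> q = q'"
  by (meson consecutive_def consecutive_le order_antisym)

lemma consecutive_cases:
  assumes "consecutive G p q" "consecutive G a b"
  shows "q \<le> a \<or> b \<le> p \<or> (p = a \<and> q = b)"
proof -
  have "a \<in> G" "p \<in> G" using assms unfolding consecutive_def by auto
  consider "p < a" | "a < p" | "p = a" by linarith
  then show ?thesis
    using consecutive_le[OF assms(1) \<open>a \<in> G\<close>] consecutive_le[OF assms(2) \<open>p \<in> G\<close>]
      consecutive_unique[OF assms(1)] assms(2) by cases auto
qed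

lemma ex_consecutive_succ:
  assumes "finite G" "x \<in> G" "y \<in> G" "x < y"
  obtains x' where "consecutive G x x'" "x' \<le> y"
proof -
  let ?T = "{t \<in> G. x < t}"
  have "finite ?T" "y \<in> ?T" using assms by auto
  then have "Min ?T \<in> ?T" "Min ?T \<le> y" using Min_in Min_le by blast+
  moreover have "consecutive G x (Min ?T)"
    unfolding consecutive_def using \<open>finite ?T\<close> \<open>Min ?T \<in> ?T\<close> assms(2) Min_le by fastforce
  ultimately show ?thesis using that by blast
qed

lemma nth_sorted_list_of_set_less:
  assumes "i < j" "j < length (sorted_list_of_set G)"
  shows "sorted_list_of_set G ! i < sorted_list_of_set G ! j"
  using sorted_wrt_nth_less[OF sorted_list_of_set.strict_sorted_key_list_of_set[of G] assms]
  by simp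

lemma nth_sorted_list_of_set_le_iff:
  assumes "i < length (sorted_list_of_set G)" "j < length (sorted_list_of_set G)"
  shows "sorted_list_of_set G ! i \<le> sorted_list_of_set G ! j \<longleftrightarrow> i \<le> j"
  using nth_sorted_list_of_set_less[OF _ assms(2), of i] nth_sorted_list_of_set_less[OF _ assms(1), of j]
  by (metis le_eq_less_or_eq linorder_not_le order_less_imp_not_less)

lemma consecutive_nth_sorted_list_of_set:
  assumes "finite G" "i + 1 < length (sorted_list_of_set G)"
  shows "consecutive G (sorted_list_of_set G ! i) (sorted_list_of_set G ! (i + 1))"
proof -
  let ?l = "sorted_list_of_set G"
  have mem: "?l ! k \<in> G" if "k < length ?l" for k
    using that assms(1) nth_mem set_sorted_list_of_set by metis
  have "\<not> (?l ! i < t \<and> t < ?l ! (i + 1))" if "t \<in> G" for t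
  proof
    assume t: "?l ! i < t \<and> t < ?l ! (i + 1)"
    obtain k where k: "k < length ?l" "?l ! k = t"
      using \<open>t \<in> G\<close> assms(1) by (metis in_set_conv_nth set_sorted_list_of_set)
    have "i < k" using t k nth_sorted_list_of_set_le_iff[of k G i] assms(2) by auto
    moreover have "k < i + 1" using t k nth_sorted_list_of_set_le_iff[of "i + 1" G k] assms(2) by auto
    ultimately show False by simp
  qed
  moreover have "?l ! i < ?l ! (i + 1)"
    using nth_sorted_list_of_set_le_iff[of "i + 1" G i] assms(2) by simp
  ultimately show ?thesis unfolding consecutive_def using mem assms(2) by auto
qed

lemma consecutive_imp_nth_sorted_list_of_set:
  assumes "finite G" "consecutive G p q"
  obtains i where "i + 1 < length (sorted_list_of_set G)"
    "sorted_list_of_set G ! i = p" "sorted_list_of_set G ! (i + 1) = q"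
proof -
  let ?l = "sorted_list_of_set G"
  obtain i where i: "i < length ?l" "?l ! i = p"
    using assms by (metis consecutive_def in_set_conv_nth set_sorted_list_of_set)
  obtain j where j: "j < length ?l" "?l ! j = q"
    using assms by (metis consecutive_def in_set_conv_nth set_sorted_list_of_set)
  have "i < j" using nth_sorted_list_of_set_le_iff[OF j(1) i(1)] i j assms(2)
    unfolding consecutive_def by auto
  have "j = i + 1"
  proof (rule ccontr)
    assume "j \<noteq> i + 1"
    with \<open>i < j\<close> have "i + 1 < j" by simp
    then have "p < ?l ! (i + 1)" "?l ! (i + 1) < q"
      using nth_sorted_list_of_set_less[of _ _ G] i j by auto
    moreover have "?l ! (i + 1) \<in> G"
      using nth_mem[of "i + 1" ?l] \<open>i + 1 < j\<close> j(1) assms(1) by simp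
    ultimately show False using assms(2) unfolding consecutive_def by blast
  qed
  then show ?thesis using that i j by auto
qed

lemma pure_sparse_iff_consecutive:
  assumes "finite G"
  shows "pure_sparse \<kappa> G \<longleftrightarrow>
    (\<forall>p q. consecutive G p q \<longrightarrow> q - p \<le> \<kappa>) \<and> (\<exists>p. consecutive G p (p + \<kappa>))"
proof -
  have "(\<exists>p q. consecutive G p q \<and> q - p = \<kappa>) \<longleftrightarrow> (\<exists>p. consecutive G p (p + \<kappa>))"
  proof
    assume "\<exists>p q. consecutive G p q \<and> q - p = \<kappa>"
    then obtain p q where "consecutive G p q" "q - p = \<kappa>" by blast
    moreover from this have "q = p + \<kappa>" unfolding consecutive_def by auto
    ultimately show "\<exists>p. consecutive G p (p + \<kappa>)" by auto
  qed fastforce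
  moreover have "pure_sparse \<kappa> G \<longleftrightarrow>
    (\<forall>p q. consecutive G p q \<longrightarrow> q - p \<le> \<kappa>) \<and> (\<exists>p q. consecutive G p q \<and> q - p = \<kappa>)"
    unfolding pure_sparse_def Let_def
    using consecutive_nth_sorted_list_of_set[OF assms] consecutive_imp_nth_sorted_list_of_set[OF assms]
    by metis
  ultimately show ?thesis by simp
qed



section \<open>Gapsets\<close>

lemma gapset_finite: "gapset G \<Longrightarrow> finite G"
  unfolding gapset_def by simp

lemma gapset_zero_notin: "gapset G \<Longrightarrow> 0 \<notin> G"
  unfolding gapset_def by simp

lemma gapset_add_notin:
  "gapset G \<Longrightarrow> x \<notin> G \<Longrightarrow> y \<notin> G \<Longrightarrow> 0 < x \<Longrightarrow> 0 < y \<Longrightarrow> x + y \<notin> G"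
  unfolding gapset_def by blast

lemma gapset_diff_mem:
  assumes "gapset G" "y \<in> G" "x \<notin> G" "0 < x" "x < y"
  shows "y - x \<in> G"
  using gapset_add_notin[OF assms(1) _ assms(3), of "y - x"] assms by fastforce

lemma multiplicity_le: "0 < x \<Longrightarrow> x \<notin> G \<Longrightarrow> multiplicity G \<le> x"
  unfolding multiplicity_def by (rule Least_le) simp

lemma mem_below_multiplicity: "0 < x \<Longrightarrow> x < multiplicity G \<Longrightarrow> x \<in> G"
  using multiplicity_le by (meson not_le)

lemma multiplicity_pos_notin:
  assumes "finite G"
  shows "0 < multiplicity G" "multiplicity G \<notin> G"
proof -
  have "x \<le> Max (insert 0 G)" if "x \<in> G" for x using Max_ge[of "insert 0 G" x] assms that by auto
  then have "0 < Suc (Max (insert 0 G)) \<and> Suc (Max (insert 0 G)) \<notin> G" by fastforce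
  then have "0 < multiplicity G \<and> multiplicity G \<notin> G"
    unfolding multiplicity_def by (rule LeastI)
  then show "0 < multiplicity G" "multiplicity G \<notin> G" by auto
qed

lemma multiplicity_le_Suc_card:
  assumes "finite G"
  shows "multiplicity G \<le> card G + 1"
proof -
  have "{1..<multiplicity G} \<subseteq> G" using mem_below_multiplicity by auto
  from card_mono[OF assms this] show ?thesis by simp
qed

lemma jump_le_multiplicity:
  assumes g: "gapset G" and pq: "consecutive G p q"
  shows "q - p \<le> multiplicity G"
proof (rule ccontr)
  let ?m = "multiplicity G"
  assume "\<not> q - p \<le> ?m"
  have "0 < ?m" "?m \<notin> G" using multiplicity_pos_notin gapset_finite[OF g] by auto
  moreover from this have "q - ?m \<notin> G" "0 < q - ?m"
    using pq \<open>\<not> q - p \<le> ?m\<close> unfolding consecutive_def by auto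
  ultimately have "?m + (q - ?m) \<notin> G" using gapset_add_notin[OF g] by blast
  moreover have "?m + (q - ?m) = q" using \<open>0 < q - ?m\<close> by simp
  ultimately show False using pq unfolding consecutive_def by simp
qed

lemma jump_unique:
  assumes g: "gapset H" and a: "consecutive H a (a + \<kappa>)" and p: "consecutive H p (p + \<kappa>)"
    and "2 \<le> \<kappa>" "\<kappa> \<le> multiplicity H" "Max H + 2 \<le> 3 * \<kappa>"
  shows "p = a"
proof -
  have fin: "finite H" using gapset_finite[OF g] .
  have start: "multiplicity H \<le> x + 1" "x + \<kappa> \<le> Max H" if "consecutive H x (x + \<kappa>)" for x
  proof -
    have "x + 1 \<notin> H" using that \<open>2 \<le> \<kappa>\<close> unfolding consecutive_def by auto
    then show "multiplicity H \<le> x + 1" by (simp add: multiplicity_le)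
    show "x + \<kappa> \<le> Max H" using that Max_ge[OF fin] unfolding consecutive_def by simp
  qed
  show ?thesis
    using consecutive_cases[OF p a] start[OF a] start[OF p] assms(5,6) by linarith
qed

lemma conductor_eq_Max:
  assumes "finite G" "G \<noteq> {}"
  shows "conductor G = Max G + 1"
  unfolding conductor_def
proof (rule Least_equality)
  show "0 < Max G + 1 \<and> (\<forall>t. Max G + 1 + t \<notin> G)" using Max_ge[OF assms(1)] by fastforce
next
  fix y assume y: "0 < y \<and> (\<forall>t. y + t \<notin> G)"
  show "Max G + 1 \<le> y"
  proof (rule ccontr)
    assume "\<not> Max G + 1 \<le> y"
    then have "y + (Max G - y) = Max G" by simp
    then show False using y Max_in[OF assms] by metis
  qed
qed

lemma depth_le_3_iff:
  assumes "finite G" "G \<noteq> {}"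
  shows "depth G \<le> 3 \<longleftrightarrow> Max G < 3 * multiplicity G"
proof -
  let ?m = "multiplicity G"
  have "0 < ?m" using multiplicity_pos_notin(1)[OF assms(1)] .
  have "depth G = (Max G + ?m) div ?m"
    unfolding depth_def conductor_eq_Max[OF assms] by simp
  also have "\<dots> = Max G div ?m + 1" using \<open>0 < ?m\<close> by (simp add: div_add_self2)
  finally have "depth G \<le> 3 \<longleftrightarrow> Max G div ?m < 3" by linarith
  also have "\<dots> \<longleftrightarrow> Max G < 3 * ?m" using \<open>0 < ?m\<close> by (simp add: div_less_iff_less_mult)
  finally show ?thesis .
qed

lemma pseudo_symmetric_iff:
  assumes "finite G" "G \<noteq> {}"
  shows "pseudo_symmetric G \<longleftrightarrow> int (Max G) = 2 * int (card G) - 2"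
  unfolding pseudo_symmetric_def frobenius_def genus_def conductor_eq_Max[OF assms] by simp

lemma Max_add_card_symmetric_le:
  assumes g: "gapset G" and "G \<noteq> {}"
  shows "Max G + 1 + card (G \<inter> (\<lambda>x. Max G - x) ` G) \<le> 2 * card G"
proof -
  let ?F = "Max G" and ?R = "(\<lambda>x. Max G - x) ` G"
  have fin: "finite G" using gapset_finite[OF g] .
  have "?F \<in> G" using Max_in[OF fin assms(2)] .
  have "{0..?F} \<subseteq> G \<union> ?R"
  proof
    fix x assume x: "x \<in> {0..?F}"
    show "x \<in> G \<union> ?R"
    proof (cases "x \<in> G")
      case False
      show ?thesis
      proof (cases "?F - x \<in> G")
        case True
        then have "?F - (?F - x) \<in> ?R" by (rule imageI)
        then show ?thesis using x by simp
      next
        case False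
        have "x \<noteq> 0" using False \<open>?F \<in> G\<close> by (intro notI) simp
        have "x \<noteq> ?F" using \<open>x \<notin> G\<close> \<open>?F \<in> G\<close> by blast
        with \<open>x \<noteq> 0\<close> have "x + (?F - x) \<notin> G" using gapset_add_notin[OF g \<open>x \<notin> G\<close> False] x by simp
        then show ?thesis using x \<open>?F \<in> G\<close> by simp
      qed
    qed simp
  qed
  then have "card {0..?F} \<le> card (G \<union> ?R)" using fin by (intro card_mono) auto
  then have "?F + 1 \<le> card (G \<union> ?R)" by simp
  moreover have "card (G \<union> ?R) + card (G \<inter> ?R) = card G + card ?R"
    using card_Un_Int[of G ?R] fin by simp
  moreover have "card ?R \<le> card G" using card_image_le fin by blast
  ultimately show ?thesis by linarith
qed

lemma Max_add_3_le_of_symmetric_pair: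
  assumes g: "gapset G" and "y \<in> G" "Max G - y \<in> G" "y \<noteq> Max G - y" "y \<le> Max G"
  shows "Max G + 3 \<le> 2 * card G"
proof -
  let ?F = "Max G"
  have fin: "finite G" using gapset_finite[OF g] .
  have "?F - (?F - y) \<in> (\<lambda>x. ?F - x) ` G" using \<open>?F - y \<in> G\<close> by (rule imageI)
  moreover have "?F - y \<in> (\<lambda>x. ?F - x) ` G" using \<open>y \<in> G\<close> by (rule imageI)
  ultimately have "{y, ?F - y} \<subseteq> G \<inter> (\<lambda>x. ?F - x) ` G" using assms(2,3,5) by simp
  then have "card {y, ?F - y} \<le> card (G \<inter> (\<lambda>x. ?F - x) ` G)" using fin by (intro card_mono) auto
  then have "2 \<le> card (G \<inter> (\<lambda>x. ?F - x) ` G)" using \<open>y \<noteq> ?F - y\<close> by simp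
  moreover have "G \<noteq> {}" using \<open>y \<in> G\<close> by auto
  ultimately show ?thesis using Max_add_card_symmetric_le[OF g] by fastforce
qed

lemma card_le_of_jump_ge_multiplicity:
  assumes g: "gapset G" and jump: "consecutive G A B" and "A + 1 = multiplicity G"
    and "A + multiplicity G \<le> B" and "Max G \<le> B + multiplicity G"
  shows "card G \<le> A + 2"
proof -
  let ?m = "multiplicity G"
  have fin: "finite G" using gapset_finite[OF g] .
  have "0 < ?m" "?m \<notin> G" using multiplicity_pos_notin[OF fin] by auto
  have "t \<in> {1..A} \<union> {B, B + ?m}" if t: "t \<in> G" for t
  proof (cases "t \<le> A")
    case True
    then show ?thesis using gapset_zero_notin[OF g] t by (cases t) auto
  next
    case False
    then have "B \<le> t" using consecutive_le[OF jump t] by simp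
    show ?thesis
    proof (cases "t = B")
      case False
      with \<open>B \<le> t\<close> have "A < t - ?m" "t - ?m \<le> B" "?m < t"
        using assms(4,5) Max_ge[OF fin t] by auto
      moreover from this have "t - ?m \<in> G" using gapset_diff_mem[OF g t \<open>?m \<notin> G\<close> \<open>0 < ?m\<close>] by simp
      ultimately have "t - ?m = B" using consecutive_le[OF jump] by (meson le_antisym)
      then show ?thesis using \<open>?m < t\<close> by auto
    qed simp
  qed
  then have "G \<subseteq> {1..A} \<union> {B, B + ?m}" by blast
  then have "card G \<le> card ({1..A} \<union> {B, B + ?m})" by (intro card_mono) auto
  also have "\<dots> \<le> card {1..A} + card {B, B + ?m}" by (rule card_Un_le)
  also have "\<dots> \<le> A + 2" by (simp add: card_insert_le_m1)
  finally show ?thesis .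
qed

lemma Max_lt_of_depth_le_3:
  assumes g: "gapset G" and card: "card G = 3 * n + 1" and "0 < n"
    and sparse: "\<And>p q. consecutive G p q \<Longrightarrow> q - p \<le> 2 * n" and depth: "depth G \<le> 3"
  shows "Max G < 6 * n"
proof (rule ccontr)
  let ?m = "multiplicity G" and ?F = "Max G"
  assume "\<not> ?F < 6 * n"
  have fin: "finite G" using gapset_finite[OF g] .
  have "G \<noteq> {}" using card by auto
  have "?F \<in> G" using Max_in[OF fin \<open>G \<noteq> {}\<close>] .
  have "0 < ?m" "?m \<notin> G" using multiplicity_pos_notin[OF fin] by auto
  have "?F < 3 * ?m" using depth depth_le_3_iff[OF fin \<open>G \<noteq> {}\<close>] by simp
  have "?m < ?F"
    using multiplicity_le_Suc_card[OF fin] card \<open>\<not> ?F < 6 * n\<close> \<open>0 < n\<close> by linarith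
  have "insert ?F {1..<?m} \<subseteq> G" using mem_below_multiplicity \<open>?F \<in> G\<close> by auto
  then have "card (insert ?F {1..<?m}) \<le> 3 * n + 1" using card_mono[OF fin] card by metis
  then have "?m \<le> 3 * n + 1" using \<open>?m < ?F\<close> \<open>0 < ?m\<close> by simp
  text \<open>Sparseness forces a gap y strictly between p and F, and by the choice of p,
    y and F - y are two distinct gaps, which the pairing bound forbids once F \<ge> 2g - 2.\<close>
  define p where "p = max (?F - ?m) (?m - 1)"
  have "p \<in> G"
    using gapset_diff_mem[OF g \<open>?F \<in> G\<close> \<open>?m \<notin> G\<close> \<open>0 < ?m\<close> \<open>?m < ?F\<close>]
      mem_below_multiplicity[of "?m - 1" G] \<open>?F < 3 * ?m\<close> \<open>\<not> ?F < 6 * n\<close> \<open>0 < n\<close>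
    unfolding p_def by (auto simp: max_def)
  moreover have "p < ?F" "2 * n < ?F - p"
    unfolding p_def using \<open>?m < ?F\<close> \<open>?m \<le> 3 * n + 1\<close> \<open>?F < 3 * ?m\<close> \<open>\<not> ?F < 6 * n\<close> \<open>0 < n\<close>
    by (auto simp: max_def)
  ultimately obtain y where y: "consecutive G p y" "y \<le> ?F"
    using ex_consecutive_succ[OF fin _ \<open>?F \<in> G\<close>] by blast
  have "y \<in> G" "p < y" using y unfolding consecutive_def by auto
  then have "y < ?F" using sparse[OF y(1)] \<open>2 * n < ?F - p\<close> by linarith
  have "?F - ?m < y" "?m - 1 < y" using \<open>p < y\<close> unfolding p_def by auto
  then have "?F - y \<in> G" using mem_below_multiplicity[of "?F - y" G] \<open>y < ?F\<close> by simp
  moreover have "y \<noteq> ?F - y" using \<open>?F - ?m < y\<close> \<open>?m - 1 < y\<close> \<open>y < ?F\<close> by linarith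
  ultimately have "?F + 3 \<le> 2 * card G"
    using Max_add_3_le_of_symmetric_pair[OF g \<open>y \<in> G\<close>] \<open>y < ?F\<close> by simp
  then show False using card \<open>\<not> ?F < 6 * n\<close> by linarith
qed

lemma Max_ne_of_symmetric:
  assumes g: "gapset H" and symmetric: "Max H + 1 = 2 * card H"
    and sparse: "\<And>p q. consecutive H p q \<Longrightarrow> q - p \<le> \<kappa>" and "2 \<le> \<kappa>" "\<kappa> \<le> multiplicity H"
  shows "Max H \<noteq> 3 * \<kappa>"
proof
  let ?m = "multiplicity H" and ?F = "Max H"
  assume F: "?F = 3 * \<kappa>"
  have fin: "finite H" using gapset_finite[OF g] .
  have "H \<noteq> {}" using symmetric by auto
  have "?F \<in> H" using Max_in[OF fin \<open>H \<noteq> {}\<close>] .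
  have "0 < ?m" "?m \<notin> H" using multiplicity_pos_notin[OF fin] by auto
  have no_pair: "?F - x \<notin> H" if "x \<in> H" for x
  proof
    assume "?F - x \<in> H"
    then have "?F - (?F - x) \<in> (\<lambda>x. ?F - x) ` H" by (rule imageI)
    moreover have "x \<le> ?F" using Max_ge[OF fin that] .
    ultimately have "x \<in> H \<inter> (\<lambda>x. ?F - x) ` H" using that by simp
    then have "card (H \<inter> (\<lambda>x. ?F - x) ` H) \<noteq> 0" using fin by auto
    then show False using Max_add_card_symmetric_le[OF g \<open>H \<noteq> {}\<close>] symmetric by linarith
  qed
  have "?m < ?F" using multiplicity_le_Suc_card[OF fin] symmetric F \<open>2 \<le> \<kappa>\<close> by linarith
  have "?F - ?m \<in> H" using gapset_diff_mem[OF g \<open>?F \<in> H\<close> \<open>?m \<notin> H\<close> \<open>0 < ?m\<close> \<open>?m < ?F\<close>] .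
  have "consecutive H (?F - ?m) ?F"
    unfolding consecutive_def
  proof (intro conjI allI impI)
    fix t assume t: "?F - ?m < t \<and> t < ?F"
    then have "?F - t \<in> H" using mem_below_multiplicity[of "?F - t" H] by auto
    then show "t \<notin> H" using no_pair[of "?F - t"] t by auto
  qed (use \<open>?F - ?m \<in> H\<close> \<open>?F \<in> H\<close> \<open>0 < ?m\<close> \<open>?m < ?F\<close> in auto)
  then have "?F - (?F - ?m) \<le> \<kappa>" by (rule sparse)
  then have "?m = \<kappa>" using \<open>?m < ?F\<close> \<open>\<kappa> \<le> ?m\<close> by simp
  then have "?F - ?m = ?m + ?m" using F by simp
  then show False using \<open>?F - ?m \<in> H\<close> gapset_add_notin[OF g \<open>?m \<notin> H\<close> \<open>?m \<notin> H\<close> \<open>0 < ?m\<close> \<open>0 < ?m\<close>] by simp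
qed

section \<open>The shift underlying \<sigma>\<close>

lemma ex_last_jump:
  assumes "finite G" "pure_sparse \<kappa> G"
  obtains A where "consecutive G A (A + \<kappa>)" "\<And>p. consecutive G p (p + \<kappa>) \<Longrightarrow> p \<le> A"
proof -
  let ?P = "{p. consecutive G p (p + \<kappa>)}"
  have "?P \<subseteq> G" unfolding consecutive_def by auto
  then have "finite ?P" using assms(1) finite_subset by blast
  moreover have "?P \<noteq> {}" using assms pure_sparse_iff_consecutive by blast
  ultimately show ?thesis using that Max_in Max_ge by blast
qed

text \<open>\<open>\<sigma>(G)\<close> with the jump \<open>l\<^sub>\<alpha> < l\<^sub>\<alpha>\<^sub>+\<^sub>1\<close> given explicitly as A < B.\<close>

definition sigma_split :: "nat \<Rightarrow> nat \<Rightarrow> nat set \<Rightarrow> nat set" where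
  "sigma_split A B G = {1} \<union> (\<lambda>x. x + 1) ` {x \<in> G. x \<le> A} \<union> (\<lambda>x. x + 2) ` {x \<in> G. B \<le> x}"

lemma sigma_eq_sigma_split:
  assumes fin: "finite G" and jump: "consecutive G A (A + 2 * n)"
    and last: "\<And>p. consecutive G p (p + 2 * n) \<Longrightarrow> p \<le> A"
  shows "sigma n G = sigma_split A (A + 2 * n) G"
proof -
  let ?l = "sorted_list_of_set G"
  obtain i where i: "i + 1 < length ?l" "?l ! i = A" "?l ! (i + 1) = A + 2 * n"
    using consecutive_imp_nth_sorted_list_of_set[OF fin jump] by blast
  have last_index: "(GREATEST j. j + 1 < length ?l \<and> ?l ! (j + 1) - ?l ! j = 2 * n) = i"
  proof (rule Greatest_equality)
    show "i + 1 < length ?l \<and> ?l ! (i + 1) - ?l ! i = 2 * n" using i by simp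
  next
    fix j assume j: "j + 1 < length ?l \<and> ?l ! (j + 1) - ?l ! j = 2 * n"
    have "consecutive G (?l ! j) (?l ! (j + 1))"
      using consecutive_nth_sorted_list_of_set[OF fin] j by blast
    moreover from this have "?l ! (j + 1) = ?l ! j + 2 * n" using j unfolding consecutive_def by auto
    ultimately have "?l ! j \<le> ?l ! i" using last i by auto
    then show "j \<le> i" using nth_sorted_list_of_set_le_iff[of j G i] j i by auto
  qed
  have index: "\<exists>j < length ?l. ?l ! j = x" if "x \<in> G" for x
    using that fin by (metis in_set_conv_nth set_sorted_list_of_set)
  have mem: "?l ! j \<in> G" if "j < length ?l" for j
    using that fin nth_mem set_sorted_list_of_set by metis
  have lower: "{?l ! j + 1 | j. j \<le> i} = (\<lambda>x. x + 1) ` {x \<in> G. x \<le> A}"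
    using index mem nth_sorted_list_of_set_le_iff[of _ G i] i
    by (fastforce simp: image_iff)
  have upper: "{?l ! j + 2 | j. i < j \<and> j < length ?l} = (\<lambda>x. x + 2) ` {x \<in> G. A + 2 * n \<le> x}"
    using index mem nth_sorted_list_of_set_le_iff[of "i + 1" G] i
    by (fastforce simp: image_iff)
  show ?thesis unfolding sigma_def Let_def sigma_split_def last_index lower upper ..
qed

lemma mem_sigma_split:
  "z \<in> sigma_split A B G \<longleftrightarrow>
     z = 1 \<or> (1 \<le> z \<and> z - 1 \<in> G \<and> z - 1 \<le> A) \<or> (2 \<le> z \<and> z - 2 \<in> G \<and> B \<le> z - 2)"
proof -
  have shift: "z \<in> (\<lambda>x. x + k) ` S \<longleftrightarrow> k \<le> z \<and> z - k \<in> S" for k and S :: "nat set"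
    by (auto simp: image_iff) (metis le_add_diff_inverse2)
  show ?thesis unfolding sigma_split_def by (simp only: Un_iff shift mem_Collect_eq singleton_iff) blast
qed

lemma Suc_mem_sigma_split_iff:
  assumes "consecutive G A B" "x \<le> A"
  shows "x + 1 \<in> sigma_split A B G \<longleftrightarrow> x = 0 \<or> x \<in> G"
  using assms unfolding mem_sigma_split consecutive_def by auto

lemma add_2_mem_sigma_split_iff:
  assumes "consecutive G A B" "B \<le> x"
  shows "x + 2 \<in> sigma_split A B G \<longleftrightarrow> x \<in> G"
  using assms unfolding mem_sigma_split consecutive_def by auto

lemma notin_sigma_split_between:
  assumes "A + 1 < y" "y < B + 2"
  shows "y \<notin> sigma_split A B G"
  using assms unfolding mem_sigma_split by auto

lemma finite_sigma_split: "finite G \<Longrightarrow> finite (sigma_split A B G)"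
  by (simp add: sigma_split_def)

lemma zero_notin_sigma_split: "0 \<notin> sigma_split A B G"
  by (simp add: mem_sigma_split)

lemma card_sigma_split:
  assumes fin: "finite G" and "0 \<notin> G" and jump: "consecutive G A B"
  shows "card (sigma_split A B G) = card G + 1"
proof -
  let ?L = "{x \<in> G. x \<le> A}" and ?U = "{x \<in> G. B \<le> x}"
  have "G = ?L \<union> ?U" "?L \<inter> ?U = {}" using jump unfolding consecutive_def by (auto simp: not_le)
  then have card_G: "card G = card ?L + card ?U" using fin card_Un_disjoint[of ?L ?U] by simp
  have "card ((\<lambda>x. x + 1) ` ?L \<union> (\<lambda>x. x + 2) ` ?U) = card ?L + card ?U"
    using jump fin unfolding consecutive_def
    by (subst card_Un_disjoint) (auto simp: card_image inj_on_def)
  moreover have "sigma_split A B G = insert 1 ((\<lambda>x. x + 1) ` ?L \<union> (\<lambda>x. x + 2) ` ?U)"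
    unfolding sigma_split_def by auto
  moreover have "1 \<notin> (\<lambda>x. x + 1) ` ?L \<union> (\<lambda>x. x + 2) ` ?U" using \<open>0 \<notin> G\<close> by auto
  ultimately show ?thesis using card_G fin by simp
qed

lemma Max_sigma_split:
  assumes fin: "finite G" and jump: "consecutive G A B"
  shows "Max (sigma_split A B G) = Max G + 2"
proof (rule Max_eqI)
  have "B \<in> G" using jump unfolding consecutive_def by simp
  then have "Max G \<in> G" "B \<le> Max G" using fin Max_in Max_ge by auto
  then show "Max G + 2 \<in> sigma_split A B G" using add_2_mem_sigma_split_iff[OF jump] by simp
next
  have bound: "x \<in> G \<Longrightarrow> x \<le> Max G" for x using fin by simp
  fix z assume "z \<in> sigma_split A B G"
  then consider "z = 1" | "1 \<le> z" "z - 1 \<in> G" | "2 \<le> z" "z - 2 \<in> G"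
    unfolding mem_sigma_split by blast
  then show "z \<le> Max G + 2" by cases (auto dest: bound)
qed (rule finite_sigma_split[OF fin])

lemma consecutive_sigma_split_lower:
  assumes jump: "consecutive G A B" and pq: "consecutive G p q" and "q \<le> A"
  shows "consecutive (sigma_split A B G) (p + 1) (q + 1)"
proof -
  have iff: "x + 1 \<in> sigma_split A B G \<longleftrightarrow> x = 0 \<or> x \<in> G" if "x \<le> A" for x
    using Suc_mem_sigma_split_iff[OF jump that] .
  have "t \<notin> sigma_split A B G" if "p + 1 < t" "t < q + 1" for t
  proof -
    have "t - 1 \<le> A" "t - 1 \<noteq> 0" "p < t - 1" "t - 1 < q" using that \<open>q \<le> A\<close> by auto
    moreover from this have "t - 1 \<notin> G" using pq unfolding consecutive_def by simp
    ultimately have "(t - 1) + 1 \<notin> sigma_split A B G" using iff[of "t - 1"] by simp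
    then show ?thesis using that by simp
  qed
  moreover have "p \<in> G" "q \<in> G" "p < q" using pq unfolding consecutive_def by auto
  moreover from this have "p + 1 \<in> sigma_split A B G" "q + 1 \<in> sigma_split A B G"
    using iff \<open>q \<le> A\<close> by simp_all
  ultimately show ?thesis unfolding consecutive_def by simp
qed

lemma consecutive_sigma_split_upper:
  assumes jump: "consecutive G A B" and pq: "consecutive G p q" and "B \<le> p"
  shows "consecutive (sigma_split A B G) (p + 2) (q + 2)"
proof -
  have iff: "x + 2 \<in> sigma_split A B G \<longleftrightarrow> x \<in> G" if "B \<le> x" for x
    using add_2_mem_sigma_split_iff[OF jump that] .
  have "t \<notin> sigma_split A B G" if "p + 2 < t" "t < q + 2" for t
  proof -
    have "B \<le> t - 2" "p < t - 2" "t - 2 < q" using that \<open>B \<le> p\<close> by auto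
    moreover from this have "t - 2 \<notin> G" using pq unfolding consecutive_def by simp
    ultimately have "(t - 2) + 2 \<notin> sigma_split A B G" using iff[of "t - 2"] by simp
    moreover have "(t - 2) + 2 = t" using that by arith
    ultimately show ?thesis by simp
  qed
  moreover have "p \<in> G" "q \<in> G" "p < q" using pq unfolding consecutive_def by auto
  moreover from this have "p + 2 \<in> sigma_split A B G" "q + 2 \<in> sigma_split A B G"
    using iff \<open>B \<le> p\<close> by simp_all
  ultimately show ?thesis unfolding consecutive_def by simp
qed

lemma consecutive_sigma_split_middle:
  assumes jump: "consecutive G A B"
  shows "consecutive (sigma_split A B G) (A + 1) (B + 2)"
proof -
  have "A \<in> G" "B \<in> G" "A < B" using jump unfolding consecutive_def by auto
  then show ?thesis
    using Suc_mem_sigma_split_iff[OF jump, of A] add_2_mem_sigma_split_iff[OF jump, of B]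
      notin_sigma_split_between[of A _ B G]
    unfolding consecutive_def by auto
qed

lemma consecutive_sigma_split_cases:
  assumes fin: "finite G" and "0 \<notin> G" "1 \<in> G" and jump: "consecutive G A B"
    and pq: "consecutive (sigma_split A B G) p q"
  shows "q = p + 1 \<or> (p = A + 1 \<and> q = B + 2) \<or> (\<exists>p' q'. consecutive G p' q' \<and> q - p = q' - p')"
proof -
  let ?H = "sigma_split A B G"
  have "p \<in> ?H" "q \<in> ?H" "p < q" using pq unfolding consecutive_def by auto
  have "A \<in> G" "A < B" using jump unfolding consecutive_def by auto
  with \<open>0 \<notin> G\<close> have "1 \<le> A" by (cases A) auto
  consider "p = 1" | "p - 1 = A" "1 \<le> p" | "p - 1 < A" "1 \<le> p" "p - 1 \<in> G"
    | "B \<le> p - 2" "2 \<le> p" "p - 2 \<in> G"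
    using \<open>p \<in> ?H\<close> unfolding mem_sigma_split by force
  then show ?thesis
  proof cases
    case 1
    have "1 + 1 \<in> ?H" using Suc_mem_sigma_split_iff[OF jump \<open>1 \<le> A\<close>] \<open>1 \<in> G\<close> by simp
    then show ?thesis using consecutive_le[OF pq] \<open>p < q\<close> 1 by fastforce
  next
    case 2
    then show ?thesis using consecutive_unique[OF pq] consecutive_sigma_split_middle[OF jump] by force
  next
    case 3
    then obtain x where x: "consecutive G (p - 1) x" "x \<le> A"
      using ex_consecutive_succ[OF fin _ \<open>A \<in> G\<close>] by blast
    moreover have "p - 1 + 1 = p" using 3 by simp
    ultimately have "consecutive ?H p (x + 1)"
      using consecutive_sigma_split_lower[OF jump x(1,2)] by metis
    then show ?thesis using consecutive_unique[OF pq] x 3 by fastforce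
  next
    case 4
    have "A + 1 < q" using 4 \<open>p < q\<close> \<open>A < B\<close> by linarith
    then have "B + 2 \<le> q" using notin_sigma_split_between \<open>q \<in> ?H\<close> by (meson not_le)
    moreover have "q - 2 + 2 = q" using \<open>B + 2 \<le> q\<close> by simp
    ultimately have "q - 2 \<in> G" "p - 2 < q - 2"
      using add_2_mem_sigma_split_iff[OF jump, of "q - 2"] \<open>q \<in> ?H\<close> \<open>p < q\<close> 4 by auto
    then obtain x where x: "consecutive G (p - 2) x"
      using ex_consecutive_succ[OF fin \<open>p - 2 \<in> G\<close>] by blast
    moreover have "p - 2 + 2 = p" using 4 by simp
    ultimately have "consecutive ?H p (x + 2)"
      using consecutive_sigma_split_upper[OF jump x] 4 by metis
    then show ?thesis using consecutive_unique[OF pq] x 4 by fastforce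
  qed
qed

lemma pure_sparse_sigma_split_iff:
  assumes fin: "finite G" and "0 \<notin> G" "1 \<in> G" and jump: "consecutive G A (A + \<kappa>)"
  shows "pure_sparse \<kappa> G \<longleftrightarrow>
    pure_sparse (\<kappa> + 1) (sigma_split A (A + \<kappa>) G) \<and> (\<forall>p q. consecutive G p q \<longrightarrow> q - p \<noteq> \<kappa> + 1)"
proof -
  let ?H = "sigma_split A (A + \<kappa>) G"
  have sparse_H: "pure_sparse (\<kappa> + 1) ?H \<longleftrightarrow>
      (\<forall>p q. consecutive ?H p q \<longrightarrow> q - p \<le> \<kappa> + 1) \<and> (\<exists>p. consecutive ?H p (p + (\<kappa> + 1)))"
    using pure_sparse_iff_consecutive[OF finite_sigma_split[OF fin]] .
  have jump_H: "consecutive ?H (A + 1) ((A + 1) + (\<kappa> + 1))"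
    using consecutive_sigma_split_middle[OF jump] by (simp add: add.assoc)
  have lift: "\<exists>p' q'. consecutive ?H p' q' \<and> q' - p' = q - p"
    if pq: "consecutive G p q" and "q - p \<noteq> \<kappa>" for p q
  proof -
    consider "q \<le> A" | "A + \<kappa> \<le> p" | "p = A" "q = A + \<kappa>"
      using consecutive_cases[OF pq jump] by blast
    then show ?thesis
    proof cases
      case 1
      then have "consecutive ?H (p + 1) (q + 1)" using consecutive_sigma_split_lower[OF jump pq] by simp
      then show ?thesis by force
    next
      case 2
      then have "consecutive ?H (p + 2) (q + 2)" using consecutive_sigma_split_upper[OF jump pq] by simp
      then show ?thesis by force
    qed (use that in simp)
  qed
  show ?thesis
  proof
    assume "pure_sparse \<kappa> G"
    then have bound: "q - p \<le> \<kappa>" if "consecutive G p q" for p q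
      using pure_sparse_iff_consecutive[OF fin] that by blast
    have "q - p \<le> \<kappa> + 1" if "consecutive ?H p q" for p q
      using consecutive_sigma_split_cases[OF fin assms(2,3) jump that]
    proof (elim disjE exE conjE)
      fix p' q' assume "consecutive G p' q'" "q - p = q' - p'"
      then show ?thesis using bound by fastforce
    qed auto
    moreover have "q - p \<noteq> \<kappa> + 1" if "consecutive G p q" for p q
      using bound[OF that] by simp
    ultimately show "pure_sparse (\<kappa> + 1) ?H \<and> (\<forall>p q. consecutive G p q \<longrightarrow> q - p \<noteq> \<kappa> + 1)"
      using sparse_H jump_H by blast
  next
    assume H: "pure_sparse (\<kappa> + 1) ?H \<and> (\<forall>p q. consecutive G p q \<longrightarrow> q - p \<noteq> \<kappa> + 1)"
    have "q - p \<le> \<kappa>" if pq: "consecutive G p q" for p q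
    proof (cases "q - p = \<kappa>")
      case False
      then obtain p' q' where "consecutive ?H p' q'" "q' - p' = q - p" using lift[OF pq] by blast
      then have "q - p \<le> \<kappa> + 1" using H sparse_H by metis
      moreover have "q - p \<noteq> \<kappa> + 1" using H pq by blast
      ultimately show ?thesis by simp
    qed simp
    then show "pure_sparse \<kappa> G" using pure_sparse_iff_consecutive[OF fin] jump by blast
  qed
qed

lemma ex_sigma_split_eq:
  assumes fin: "finite H" and "0 \<notin> H" "1 \<in> H" "0 < A" "A < B"
    and jump: "consecutive H (A + 1) (B + 2)"
  obtains G where "finite G" "0 \<notin> G" "consecutive G A B" "H = sigma_split A B G"
proof -
  define G where "G = {z. 1 \<le> z \<and> z \<le> A \<and> z + 1 \<in> H} \<union> {z. B \<le> z \<and> z + 2 \<in> H}"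
  have "A + 1 \<in> H" "B + 2 \<in> H" using jump unfolding consecutive_def by auto
  have "z \<le> Max H" if "z + k \<in> H" for z k using Max_ge[OF fin that] by simp
  then have "G \<subseteq> {..Max H}" unfolding G_def by blast
  then have "finite G" using finite_subset by blast
  moreover have "0 \<notin> G" using \<open>0 < A\<close> \<open>A < B\<close> unfolding G_def by auto
  moreover have jump_G: "consecutive G A B"
    unfolding consecutive_def G_def using \<open>0 < A\<close> \<open>A < B\<close> \<open>A + 1 \<in> H\<close> \<open>B + 2 \<in> H\<close> by auto
  moreover have "z \<in> H \<longleftrightarrow> z \<in> sigma_split A B G" for z
  proof -
    consider "z = 0" | "z = 1" | "2 \<le> z" "z \<le> A + 1" | "A + 1 < z" "z < B + 2" | "B + 2 \<le> z"
      by linarith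
    then show ?thesis
    proof cases
      case 3
      then have "z - 1 \<in> G \<longleftrightarrow> z \<in> H" and "z = (z - 1) + 1" unfolding G_def using \<open>A < B\<close> by auto
      then show ?thesis using Suc_mem_sigma_split_iff[OF jump_G, of "z - 1"] 3 by simp
    next
      case 4
      then show ?thesis using jump notin_sigma_split_between unfolding consecutive_def by blast
    next
      case 5
      then obtain w where w: "z = w + 2" using le_add_diff_inverse2 by (metis add_leD2)
      then have "w \<in> G \<longleftrightarrow> z \<in> H" unfolding G_def using 5 \<open>A < B\<close> by auto
      then show ?thesis using add_2_mem_sigma_split_iff[OF jump_G, of w] 5 w by simp
    qed (use \<open>0 \<notin> H\<close> \<open>1 \<in> H\<close> zero_notin_sigma_split mem_sigma_split in auto)
  qed
  then have "H = sigma_split A B G" by blast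
  ultimately show ?thesis using that by blast
qed

lemma notin_sigma_split_cases:
  assumes jump: "consecutive G A B" and x: "x \<notin> sigma_split A B G" "0 < x"
  shows "(1 < x \<and> x \<le> B \<and> x - 1 \<notin> G) \<or> x = B + 1 \<or> (B + 2 \<le> x \<and> x - 2 \<notin> G)"
proof -
  have "x \<noteq> 1" using x(1) by (auto simp: mem_sigma_split)
  have "A < B" using jump unfolding consecutive_def by simp
  consider "x \<le> A + 1" | "A + 1 < x" "x \<le> B" | "x = B + 1" | "B + 2 \<le> x" by linarith
  then show ?thesis
  proof cases
    case 1
    then have "x - 1 \<le> A" "(x - 1) + 1 = x" using x(2) by auto
    then have "x - 1 \<notin> G" using Suc_mem_sigma_split_iff[OF jump \<open>x - 1 \<le> A\<close>] x(1) by simp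
    then show ?thesis using 1 \<open>x \<noteq> 1\<close> x(2) \<open>A < B\<close> by simp
  next
    case 2
    then have "A < x - 1" "x - 1 < B" by auto
    then show ?thesis using 2 jump unfolding consecutive_def by simp
  next
    case 4
    then have "B \<le> x - 2" "(x - 2) + 2 = x" by auto
    then show ?thesis using x(1) add_2_mem_sigma_split_iff[OF jump \<open>B \<le> x - 2\<close>] 4 by simp
  qed simp
qed

section \<open>Genus 3n + 1\<close>

lemma gapset_sigma_split:
  assumes g: "gapset G" and card: "card G = 3 * n + 1" and "0 < n"
    and jump: "consecutive G A (A + 2 * n)" and F: "Max G < 6 * n"
  shows "gapset (sigma_split A (A + 2 * n) G)"
proof -
  let ?B = "A + 2 * n" and ?H = "sigma_split A (A + 2 * n) G" and ?m = "multiplicity G"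
  have fin: "finite G" using gapset_finite[OF g] .
  have "A + 1 \<notin> G" using jump \<open>0 < n\<close> unfolding consecutive_def by auto
  then have "?m \<le> A + 1" by (simp add: multiplicity_le)
  have "2 * n \<le> ?m" using jump_le_multiplicity[OF g jump] by simp
  have large: "?m < x" if "x \<notin> ?H" "0 < x" for x
    using notin_sigma_split_cases[OF jump that] multiplicity_le[of "x - 1" G] \<open>?m \<le> A + 1\<close> \<open>0 < n\<close>
    by auto
  have "x \<in> ?H \<or> y \<in> ?H" if "z \<in> ?H" "0 < x" "0 < y" "z = x + y" for x y z
  proof (rule ccontr)
    assume "\<not> (x \<in> ?H \<or> y \<in> ?H)"
    then have out: "x \<notin> ?H" "y \<notin> ?H" by auto
    then have "?m < x" "?m < y" using large that by auto
    then have "A + 1 < z" using that \<open>2 * n \<le> ?m\<close> \<open>?m \<le> A + 1\<close> jump F Max_ge[OF fin, of ?B]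
      unfolding consecutive_def by linarith
    then have "?B + 2 \<le> z" using notin_sigma_split_between \<open>z \<in> ?H\<close> by (meson not_le)
    define w where "w = z - 2"
    have w: "z = w + 2" "?B \<le> w" using \<open>?B + 2 \<le> z\<close> unfolding w_def by auto
    then have "w \<in> G" using add_2_mem_sigma_split_iff[OF jump, of w] \<open>z \<in> ?H\<close> by simp
    then have "w \<le> Max G" using Max_ge[OF fin] by simp
    text \<open>In the boundary case u = B + 1 the gaps of G are confined to \<open>{1..A} \<union> {B, B + m}\<close>.\<close>
    have beyond: False if uv: "u \<notin> ?H" "?B < u" "?m < v" "u + v = z" for u v
    proof -
      consider "u = ?B + 1" | "?B + 2 \<le> u" "u - 2 \<notin> G"
        using notin_sigma_split_cases[OF jump uv(1)] uv(2) by auto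
      then show False
      proof cases
        case 1
        then have "A + 1 = ?m" "A + ?m \<le> ?B" "Max G \<le> ?B + ?m"
          using uv w \<open>w \<le> Max G\<close> F \<open>2 * n \<le> ?m\<close> \<open>?m \<le> A + 1\<close> by linarith+
        then show False using card_le_of_jump_ge_multiplicity[OF g jump] card \<open>0 < n\<close> by linarith
      next
        case 2
        have "?B \<in> G" using jump unfolding consecutive_def by simp
        then have "u \<noteq> ?B + 2" using \<open>u - 2 \<notin> G\<close> by (intro notI) simp
        then show False using 2 uv w \<open>w \<le> Max G\<close> F \<open>2 * n \<le> ?m\<close> \<open>?m \<le> A + 1\<close> by linarith
      qed
    qed
    show False
    proof (cases "?B < x \<or> ?B < y")
      case True
      then show ?thesis using beyond out \<open>?m < x\<close> \<open>?m < y\<close> that(4) by (metis add.commute)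
    next
      case False
      then have "x - 1 \<notin> G" "y - 1 \<notin> G"
        using notin_sigma_split_cases[OF jump out(1)] notin_sigma_split_cases[OF jump out(2)] that
        by auto
      moreover have "0 < x - 1" "0 < y - 1" using \<open>?m < x\<close> \<open>?m < y\<close> \<open>2 * n \<le> ?m\<close> \<open>0 < n\<close> by auto
      ultimately have "(x - 1) + (y - 1) \<notin> G" using gapset_add_notin[OF g] by blast
      moreover have "(x - 1) + (y - 1) = w" using w that \<open>0 < x - 1\<close> \<open>0 < y - 1\<close> by simp
      ultimately show False using \<open>w \<in> G\<close> by simp
    qed
  qed
  then show ?thesis
    unfolding gapset_def using finite_sigma_split[OF fin] zero_notin_sigma_split by blast
qed
lemma gapset_of_sigma_split:
  assumes gH: "gapset (sigma_split A (A + 2 * n) G)" and fin: "finite G" and "0 \<notin> G"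
    and jump: "consecutive G A (A + 2 * n)" and F: "Max (sigma_split A (A + 2 * n) G) \<le> 6 * n + 1"
    and "0 < n"
  shows "gapset G"
proof -
  let ?B = "A + 2 * n" and ?H = "sigma_split A (A + 2 * n) G" and ?m = "multiplicity (sigma_split A (A + 2 * n) G)"
  have fin_H: "finite ?H" using finite_sigma_split[OF fin] .
  have "2 * n + 1 \<le> ?m" using jump_le_multiplicity[OF gH consecutive_sigma_split_middle[OF jump]] by simp
  have "A + 2 \<notin> ?H" using notin_sigma_split_between \<open>0 < n\<close> by simp
  then have "?m \<le> A + 2" by (simp add: multiplicity_le)
  have "?B + 2 \<in> ?H" using consecutive_sigma_split_middle[OF jump] unfolding consecutive_def by simp
  then have "?B + 2 \<le> 6 * n + 1" using Max_ge[OF fin_H] F by (meson le_trans)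
  have shift_notin: "u + 1 \<notin> ?H" if "u \<notin> G" "0 < u" "u < ?B" for u
  proof (cases "u \<le> A")
    case True
    then show ?thesis using Suc_mem_sigma_split_iff[OF jump True] that by simp
  qed (use notin_sigma_split_between that in simp)
  have lower_bound: "?m \<le> u + 1" if "u \<notin> G" "0 < u" for u
  proof (cases "u < ?B")
    case True
    then show ?thesis using shift_notin[OF that True] multiplicity_le[of "u + 1"] by simp
  qed (use \<open>?m \<le> A + 2\<close> \<open>0 < n\<close> in simp)
  have "x \<in> G \<or> y \<in> G" if "z \<in> G" "0 < x" "0 < y" "z = x + y" for x y z
  proof (rule ccontr)
    assume "\<not> (x \<in> G \<or> y \<in> G)"
    then have out: "x \<notin> G" "y \<notin> G" by auto
    have "?B \<in> G" using jump unfolding consecutive_def by simp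
    have "?B \<le> z"
      using consecutive_le[OF jump \<open>z \<in> G\<close>] lower_bound[OF out(1) that(2)] lower_bound[OF out(2) that(3)]
        that(4) \<open>2 * n + 1 \<le> ?m\<close> \<open>?B + 2 \<le> 6 * n + 1\<close> by linarith
    then have "z + 2 \<in> ?H" using add_2_mem_sigma_split_iff[OF jump] \<open>z \<in> G\<close> by simp
    then have "z + 2 \<le> 6 * n + 1" using Max_ge[OF fin_H] F by (meson le_trans)
    show False
    proof (cases "x < ?B \<and> y < ?B")
      case True
      then have shifted: "x + 1 \<notin> ?H" "y + 1 \<notin> ?H" using shift_notin out that(2,3) by auto
      have "(x + 1) + (y + 1) \<notin> ?H" using gapset_add_notin[OF gH shifted] by simp
      then show False using \<open>z + 2 \<in> ?H\<close> that(4) by (simp add: add.commute add.left_commute)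
    next
      case False
      moreover have "x \<noteq> ?B" "y \<noteq> ?B" using out \<open>?B \<in> G\<close> by auto
      ultimately have "?B < x \<or> ?B < y" by linarith
      then show False
        using lower_bound[OF out(1) that(2)] lower_bound[OF out(2) that(3)] that(4) \<open>z + 2 \<le> 6 * n + 1\<close>
          \<open>2 * n + 1 \<le> ?m\<close> \<open>?m \<le> A + 2\<close> by linarith
    qed
  qed
  then show ?thesis unfolding gapset_def using fin \<open>0 \<notin> G\<close> by blast
qed

lemma sigma_split_jump_ne:
  assumes gH: "gapset (sigma_split A (A + \<kappa>) G)" and jump: "consecutive G A (A + \<kappa>)"
    and "\<kappa> + 1 \<le> multiplicity (sigma_split A (A + \<kappa>) G)"
    and "Max (sigma_split A (A + \<kappa>) G) + 2 \<le> 3 * (\<kappa> + 1)"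
    and pq: "consecutive G p q"
  shows "q - p \<noteq> \<kappa> + 1"
proof
  let ?H = "sigma_split A (A + \<kappa>) G"
  assume "q - p = \<kappa> + 1"
  then have q: "q = p + (\<kappa> + 1)" using pq unfolding consecutive_def by auto
  have "1 \<le> \<kappa>" using jump unfolding consecutive_def by simp
  have middle: "consecutive ?H (A + 1) ((A + 1) + (\<kappa> + 1))"
    using consecutive_sigma_split_middle[OF jump] by (simp add: add.assoc)
  have unique: "x = A + 1" if "consecutive ?H x (x + (\<kappa> + 1))" for x
    using jump_unique[OF gH middle that] \<open>1 \<le> \<kappa>\<close> assms(3,4) by simp
  consider "q \<le> A" | "A + \<kappa> \<le> p" | "p = A" "q = A + \<kappa>" using consecutive_cases[OF pq jump] by blast
  then show False
  proof cases
    case 1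
    then have "consecutive ?H (p + 1) ((p + 1) + (\<kappa> + 1))"
      using consecutive_sigma_split_lower[OF jump pq] q by simp
    then show False using unique q 1 by fastforce
  next
    case 2
    then have "consecutive ?H (p + 2) ((p + 2) + (\<kappa> + 1))"
      using consecutive_sigma_split_upper[OF jump pq] q by simp
    then show False using unique 2 by fastforce
  qed (use q in simp)
qed

lemma sigma_split_last_jump:
  assumes gH: "gapset (sigma_split A (A + 2 * n) G)" and card: "card (sigma_split A (A + 2 * n) G) = 3 * n + 2"
    and jump: "consecutive G A (A + 2 * n)" and F: "Max (sigma_split A (A + 2 * n) G) \<le> 6 * n + 1"
    and "0 < n" and pq: "consecutive G p (p + 2 * n)"
  shows "p \<le> A"
proof (rule ccontr)
  let ?H = "sigma_split A (A + 2 * n) G" and ?m = "multiplicity (sigma_split A (A + 2 * n) G)"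
  assume "\<not> p \<le> A"
  then have "A + 2 * n \<le> p" using consecutive_cases[OF pq jump] by auto
  then have "consecutive ?H (p + 2) (p + 2 * n + 2)" using consecutive_sigma_split_upper[OF jump pq] by simp
  then have "p + 2 * n + 2 \<le> Max ?H"
    using Max_ge[OF gapset_finite[OF gH]] unfolding consecutive_def by simp
  have middle: "consecutive ?H (A + 1) (A + 2 * n + 2)" using consecutive_sigma_split_middle[OF jump] .
  have "2 * n + 1 \<le> ?m" using jump_le_multiplicity[OF gH middle] by simp
  have "A + 2 \<notin> ?H" using notin_sigma_split_between \<open>0 < n\<close> by simp
  then have "?m \<le> A + 2" by (simp add: multiplicity_le)
  text \<open>The jump after A + 2n would have to end exactly at Max H = 6n + 1, which leaves room
    for at most 2n + 2 gaps.\<close>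
  then have "A + 1 + 1 = ?m" "A + 1 + ?m \<le> A + 2 * n + 2" "Max ?H \<le> A + 2 * n + 2 + ?m"
    using \<open>A + 2 * n \<le> p\<close> \<open>p + 2 * n + 2 \<le> Max ?H\<close> F \<open>2 * n + 1 \<le> ?m\<close> by linarith+
  then have "card ?H \<le> A + 1 + 2" using card_le_of_jump_ge_multiplicity[OF gH middle] by blast
  then show False using card \<open>A + 1 + 1 = ?m\<close> \<open>2 * n + 1 \<le> ?m\<close> \<open>?m \<le> A + 2\<close> F
    \<open>A + 2 * n \<le> p\<close> \<open>p + 2 * n + 2 \<le> Max ?H\<close> by linarith
qed

lemma sigma_mem_pure_sparse_gapsets:
  assumes "0 < n" and G: "G \<in> pure_sparse_gapsets_depth3 (2 * n) (3 * n + 1)"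
  shows "sigma n G \<in> pure_sparse_gapsets (2 * n + 1) (3 * n + 2) \<and> \<not> pseudo_symmetric (sigma n G)"
proof -
  have g: "gapset G" and card: "card G = 3 * n + 1" and sparse: "pure_sparse (2 * n) G"
    and depth: "depth G \<le> 3"
    using G unfolding pure_sparse_gapsets_depth3_def pure_sparse_gapsets_def genus_def by auto
  have fin: "finite G" and "0 \<notin> G" using gapset_finite[OF g] gapset_zero_notin[OF g] by auto
  obtain A where jump: "consecutive G A (A + 2 * n)"
    and last: "\<And>p. consecutive G p (p + 2 * n) \<Longrightarrow> p \<le> A"
    using ex_last_jump[OF fin sparse] by blast
  let ?H = "sigma_split A (A + 2 * n) G"
  have "2 * n \<le> multiplicity G" using jump_le_multiplicity[OF g jump] by simp
  then have "1 \<in> G" using mem_below_multiplicity \<open>0 < n\<close> by simp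
  have F: "Max G < 6 * n"
    using Max_lt_of_depth_le_3[OF g card \<open>0 < n\<close> _ depth] sparse pure_sparse_iff_consecutive[OF fin]
    by blast
  have "gapset ?H" using gapset_sigma_split[OF g card \<open>0 < n\<close> jump F] .
  moreover have "card ?H = 3 * n + 2" using card_sigma_split[OF fin \<open>0 \<notin> G\<close> jump] card by simp
  moreover have "pure_sparse (2 * n + 1) ?H"
    using pure_sparse_sigma_split_iff[OF fin \<open>0 \<notin> G\<close> \<open>1 \<in> G\<close> jump] sparse by blast
  moreover have "\<not> pseudo_symmetric ?H"
  proof -
    have "?H \<noteq> {}" using \<open>card ?H = 3 * n + 2\<close> by auto
    then show ?thesis
      using pseudo_symmetric_iff[OF finite_sigma_split[OF fin]] Max_sigma_split[OF fin jump] F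
        \<open>card ?H = 3 * n + 2\<close> by simp
  qed
  ultimately show ?thesis
    using sigma_eq_sigma_split[OF fin jump last]
    unfolding pure_sparse_gapsets_def genus_def by simp
qed

lemma mem_sigma_image:
  assumes "0 < n" and H: "H \<in> pure_sparse_gapsets (2 * n + 1) (3 * n + 2)"
    and "\<not> pseudo_symmetric H"
  shows "H \<in> sigma n ` pure_sparse_gapsets_depth3 (2 * n) (3 * n + 1)"
proof -
  have gH: "gapset H" and card_H: "card H = 3 * n + 2" and sparse_H: "pure_sparse (2 * n + 1) H"
    using H unfolding pure_sparse_gapsets_def genus_def by auto
  have fin_H: "finite H" and "0 \<notin> H" "H \<noteq> {}"
    using gapset_finite[OF gH] gapset_zero_notin[OF gH] card_H by auto
  obtain a where jump_H: "consecutive H a (a + (2 * n + 1))"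
    using sparse_H pure_sparse_iff_consecutive[OF fin_H] by blast
  have bound_H: "q - p \<le> 2 * n + 1" if "consecutive H p q" for p q
    using sparse_H pure_sparse_iff_consecutive[OF fin_H] that by blast
  have "2 * n + 1 \<le> multiplicity H" using jump_le_multiplicity[OF gH jump_H] by simp
  then have "1 \<in> H" using mem_below_multiplicity[of 1 H] \<open>0 < n\<close> by simp
  have "Max H + 1 \<le> 2 * card H" using Max_add_card_symmetric_le[OF gH \<open>H \<noteq> {}\<close>] by linarith
  moreover have "Max H \<noteq> 6 * n + 2"
    using \<open>\<not> pseudo_symmetric H\<close> pseudo_symmetric_iff[OF fin_H \<open>H \<noteq> {}\<close>] card_H by simp
  moreover have "Max H \<noteq> 6 * n + 3"
    using Max_ne_of_symmetric[OF gH _ bound_H _ \<open>2 * n + 1 \<le> multiplicity H\<close>] card_H \<open>0 < n\<close>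
    by auto
  ultimately have "Max H \<le> 6 * n + 1" using card_H by linarith
  have "a + 1 \<notin> H" using jump_H \<open>0 < n\<close> unfolding consecutive_def by auto
  then have "multiplicity H \<le> a + 1" by (simp add: multiplicity_le)
  define A where "A = a - 1"
  have "a = A + 1" "0 < A" using \<open>2 * n + 1 \<le> multiplicity H\<close> \<open>multiplicity H \<le> a + 1\<close> \<open>0 < n\<close>
    unfolding A_def by auto
  then have "consecutive H (A + 1) (A + 2 * n + 2)" using jump_H by (simp add: add.assoc)
  then obtain G where fin: "finite G" and "0 \<notin> G" and jump: "consecutive G A (A + 2 * n)"
    and H_eq: "H = sigma_split A (A + 2 * n) G"
    using ex_sigma_split_eq[OF fin_H \<open>0 \<notin> H\<close> \<open>1 \<in> H\<close> \<open>0 < A\<close>, of "A + 2 * n"] \<open>0 < n\<close> by auto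
  have g: "gapset G"
    using gapset_of_sigma_split[OF _ fin \<open>0 \<notin> G\<close> jump _ \<open>0 < n\<close>] gH \<open>Max H \<le> 6 * n + 1\<close> H_eq by blast
  have card: "card G = 3 * n + 1" using card_sigma_split[OF fin \<open>0 \<notin> G\<close> jump] card_H H_eq by simp
  have "2 * n \<le> multiplicity G" using jump_le_multiplicity[OF g jump] by simp
  then have "1 \<in> G" using mem_below_multiplicity \<open>0 < n\<close> by simp
  have "pure_sparse (2 * n) G"
    using pure_sparse_sigma_split_iff[OF fin \<open>0 \<notin> G\<close> \<open>1 \<in> G\<close> jump] sparse_H H_eq
      sigma_split_jump_ne[OF _ jump] gH \<open>2 * n + 1 \<le> multiplicity H\<close> \<open>Max H \<le> 6 * n + 1\<close>
    by fastforce
  moreover have "depth G \<le> 3"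
    using depth_le_3_iff[OF fin] Max_sigma_split[OF fin jump] H_eq \<open>Max H \<le> 6 * n + 1\<close>
      \<open>2 * n \<le> multiplicity G\<close> card by fastforce
  moreover have "sigma n G = H"
    using sigma_eq_sigma_split[OF fin jump] sigma_split_last_jump[OF _ _ jump _ \<open>0 < n\<close>]
      gH card_H H_eq \<open>Max H \<le> 6 * n + 1\<close> by blast
  ultimately show ?thesis
    using g card unfolding pure_sparse_gapsets_depth3_def pure_sparse_gapsets_def genus_def by auto
qed

theorem mainTheorem2:
  fixes n g :: nat
  assumes "0 < n" and "g = 3 * n + 1"
  shows "(\<forall>G \<in> sigma n ` pure_sparse_gapsets_depth3 (2 * n) g. \<not> pseudo_symmetric G) \<and>
         sigma n ` pure_sparse_gapsets_depth3 (2 * n) g =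
           pure_sparse_gapsets (2 * n + 1) (g + 1)
             - {G \<in> pure_sparse_gapsets (2 * n + 1) (g + 1). pseudo_symmetric G}"
proof -
  have "g + 1 = 3 * n + 2" using assms(2) by simp
  then show ?thesis
    using sigma_mem_pure_sparse_gapsets[OF assms(1)] mem_sigma_image[OF assms(1)] assms(2)
    by auto
qed

end
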